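(* Let $(X,d)$ be a path-connected metric space, $x_0\in X$, $n\geq1$. For every $r>0$ there exists $(\mathscr{U},U_0)\in\mathrm{cov}(X)$ such that $\mathrm{Span}_n(\mathscr{U},x_0)\leq B_\rho(e,r)$, where $B_\rho(e,r)=\{a\in\pi_n(X,x_0)\mid\rho(a,e)<r\}$.
   Context: Identify $n$-loops with based maps $(S^n,d_0)\to(X,x_0)$, with uniform metric $\mu(\alpha,\beta)=\sup_t d(\alpha(t),\beta(t))$; $\rho(a,b)=\inf\{\mu(\alpha,\beta)\mid\alpha\in a,\beta\in b\}$ on $\pi_n(X,x_0)$, $e$ the identity. $\mathrm{cov}(X)$ is the set of pairs $(\mathscr{U},U_0)$ with $\mathscr{U}$ a locally finite open cover of $X$ and $U_0\in\mathscr{U}$ containing $x_0$. For an open cover $\mathscr{U}$, the $n$-th Spanier group $\mathrm{Span}_n(\mathscr{U},x_0)$ is the subgroup of $\pi_n(X,x_0)$ generated by all classes $[\gamma\ast f]$ where $\gamma:[0,1]\to X$ is a path with $\gamma(0)=x_0$, $f:(S^n,d_0)\to(X,\gamma(1))$ has image in some $U\in\mathscr{U}$, and $\gamma\ast f:(S^n,d_0)\to(X,x_0)$ is the path-conjugate (the standard map obtained by precomposing with a fixed retraction $S^n\times[0,1]\to S^n\times\{0\}\cup\{d_0\}\times[0,1]$ the map that is $f$ on $S^n\times\{0\}$ and runs along $\gamma$ on $\{d_0\}\times[0,1]$; it represents the image of $[f]$ under the change-of-basepoint isomorphism along $\gamma$). *)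

theory Defs
  imports "HOL-Analysis.Analysis" "HOL-Algebra.Generated_Groups"
begin

text \<open>The n-cube is cbox 0 1 in real^'n (n = CARD('n));
  its boundary is cbox 0 1 - box 0 1. Based maps (S^n,d0) -> (X,x0) correspond
  to maps of the cube sending the boundary to x0 (via the quotient I^n/boundary = S^n),
  with the same image sets, hence the same uniform metric.\<close>

definition ncube :: "(real^'n) set" where
  "ncube = cbox 0 1"

definition nbdry :: "(real^'n) set" where
  "nbdry = cbox 0 1 - box 0 1"

definition nloop :: "'a::metric_space set \<Rightarrow> 'a \<Rightarrow> (real^'n \<Rightarrow> 'a) \<Rightarrow> bool" where
  "nloop X p f \<longleftrightarrow> continuous_on ncube f \<and> f ` ncube \<subseteq> X \<and> (\<forall>x\<in>nbdry. f x = p)"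

definition based_homotopic :: "'a::metric_space set \<Rightarrow> 'a \<Rightarrow> (real^'n \<Rightarrow> 'a) \<Rightarrow> (real^'n \<Rightarrow> 'a) \<Rightarrow> bool" where
  "based_homotopic X p f g \<longleftrightarrow>
     homotopic_with_canon (\<lambda>h. \<forall>x\<in>nbdry. h x = p) ncube X f g"

definition loop_class :: "'a::metric_space set \<Rightarrow> 'a \<Rightarrow> (real^'n \<Rightarrow> 'a) \<Rightarrow> (real^'n \<Rightarrow> 'a) set" where
  "loop_class X p f = {g. nloop X p g \<and> based_homotopic X p f g}"

definition pi_n_set :: "'a::metric_space set \<Rightarrow> 'a \<Rightarrow> (real^'n \<Rightarrow> 'a) set set" where
  "pi_n_set X p = {loop_class X p f | f. nloop X p f}"

definition coord0 :: "'n::finite" where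
  "coord0 = (SOME i. True)"

definition loop_concat :: "(real^'n \<Rightarrow> 'a) \<Rightarrow> (real^'n \<Rightarrow> 'a) \<Rightarrow> (real^'n \<Rightarrow> 'a)" where
  "loop_concat f g = (\<lambda>x.
     if x $ coord0 \<le> 1/2 then f (\<chi> j. if j = coord0 then 2 * x $ coord0 else x $ j)
     else g (\<chi> j. if j = coord0 then 2 * x $ coord0 - 1 else x $ j))"

definition pi_n :: "'a::metric_space set \<Rightarrow> 'a \<Rightarrow> ((real^'n \<Rightarrow> 'a) set) monoid" where
  "pi_n X p = \<lparr> carrier = pi_n_set X p,
      mult = (\<lambda>a b. loop_class X p (loop_concat (SOME f. f \<in> a) (SOME g. g \<in> b))),
      one = loop_class X p (\<lambda>x. p) \<rparr>"

definition loop_mu :: "(real^'n \<Rightarrow> 'a::metric_space) \<Rightarrow> (real^'n \<Rightarrow> 'a) \<Rightarrow> real" where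
  "loop_mu \<alpha> \<beta> = (SUP t\<in>ncube. dist (\<alpha> t) (\<beta> t))"

definition loop_rho :: "(real^'n \<Rightarrow> 'a::metric_space) set \<Rightarrow> (real^'n \<Rightarrow> 'a) set \<Rightarrow> real" where
  "loop_rho a b = (INF (\<alpha>, \<beta>)\<in>a \<times> b. loop_mu \<alpha> \<beta>)"

definition rho_ball :: "'a::metric_space set \<Rightarrow> 'a \<Rightarrow> real \<Rightarrow> (real^'n \<Rightarrow> 'a) set set" where
  "rho_ball X p r = {a \<in> pi_n_set X p. loop_rho a (\<one>\<^bsub>pi_n X p\<^esub>) < r}"

definition locally_finite_open_cover :: "'a::metric_space set \<Rightarrow> 'a set set \<Rightarrow> bool" where
  "locally_finite_open_cover X \<U> \<longleftrightarrow>
     (\<forall>U\<in>\<U>. openin (top_of_set X) U) \<and> \<Union>\<U> = X \<and>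
     (\<forall>x\<in>X. \<exists>V. openin (top_of_set X) V \<and> x \<in> V \<and> finite {U\<in>\<U>. U \<inter> V \<noteq> {}})"

definition cov :: "'a::metric_space set \<Rightarrow> 'a \<Rightarrow> ('a set set \<times> 'a set) set" where
  "cov X p = {(\<U>, U0). locally_finite_open_cover X \<U> \<and> U0 \<in> \<U> \<and> p \<in> U0}"

text \<open>This characterizes the
  class of gamma * f, i.e. the change-of-basepoint image of [f] along gamma.\<close>
definition path_conjugate :: "'a::metric_space set \<Rightarrow> (real \<Rightarrow> 'a) \<Rightarrow> (real^'n \<Rightarrow> 'a) \<Rightarrow> (real^'n \<Rightarrow> 'a) \<Rightarrow> bool" where
  "path_conjugate X \<gamma> f g \<longleftrightarrow>
     (\<exists>H. continuous_on ({0..1} \<times> ncube) H \<and> H ` ({0..1} \<times> ncube) \<subseteq> X \<and>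
        (\<forall>x\<in>ncube. H (0, x) = g x \<and> H (1, x) = f x) \<and>
        (\<forall>t\<in>{0..1}. \<forall>x\<in>nbdry. H (t, x) = \<gamma> t))"

definition spanier_gens :: "'a::metric_space set \<Rightarrow> 'a set set \<Rightarrow> 'a \<Rightarrow> (real^'n \<Rightarrow> 'a) set set" where
  "spanier_gens X \<U> p = {loop_class X p g | g \<gamma> f U.
      path \<gamma> \<and> path_image \<gamma> \<subseteq> X \<and> pathstart \<gamma> = p \<and>
      nloop X (pathfinish \<gamma>) f \<and> U \<in> \<U> \<and> f ` ncube \<subseteq> U \<and>
      nloop X p g \<and> path_conjugate X \<gamma> f g}"

definition spanier_group :: "'a::metric_space set \<Rightarrow> 'a set set \<Rightarrow> 'a \<Rightarrow> (real^'n \<Rightarrow> 'a) set set" where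
  "spanier_group X \<U> p = generate (pi_n X p) (spanier_gens X \<U> p)"

end

theory Submission
  imports Defs
begin

(* Since metric spaces are paracompact, X has a locally finite open cover by sets of diameter
   at most r/2. A Spanier generator [gamma * f] with f inside such a set U is represented by a
   loop alpha that runs along gamma on a collar of the cube and is a rescaled copy of f on the
   inner cube; the loop beta that runs along gamma on the collar and is constantly gamma(1) = f(0)
   inside is null-homotopic, and alpha, beta are uniformly r/2-close. Classes having a
   representative uniformly c-close to a null-homotopic loop are closed under products and
   inverses (concatenate, resp. reverse, both loops), so the whole Spanier group lies within
   rho-distance r/2 of the identity. *)

section \<open>Locally finite open refinements of ball covers\<close>

definition layer_radius :: "nat \<Rightarrow> real" where
  "layer_radius n = (1/2) ^ Suc n"

lemma layer_radius_pos: "layer_radius n > 0"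
  by (simp add: layer_radius_def)

lemma layer_radius_Suc: "layer_radius (Suc n) = layer_radius n / 2"
  by (simp add: layer_radius_def)

lemma layer_radius_antimono: "m \<le> n \<Longrightarrow> layer_radius n \<le> layer_radius m"
  unfolding layer_radius_def by (rule power_decreasing) auto

lemma ex_layer_radius_less: "e > 0 \<Longrightarrow> \<exists>n. layer_radius n < e"
proof -
  assume "e > 0"
  then obtain n where "(1/2::real) ^ n < e"
    using real_arch_pow_inv[of e "1/2"] by auto
  then have "layer_radius n < e"
    using \<open>e > 0\<close> unfolding layer_radius_def power_Suc by linarith
  then show ?thesis ..
qed

text \<open>A. H. Stone's theorem that metric spaces are paracompact, in M. E. Rudin's proof.
  \<open>centres_separate\<close> holds if every point takes the least centre, in a well-ordering, whose
  \<open>\<rho>\<close>-ball contains it.\<close>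

locale centre_choice =
  fixes centre :: "'a::metric_space \<Rightarrow> 'a" and \<rho> :: real
  assumes mem_ball_centre: "c \<in> ball (centre c) \<rho>"
    and centres_separate: "centre c \<noteq> centre c' \<Longrightarrow> c' \<notin> ball (centre c) \<rho> \<or> c \<notin> ball (centre c') \<rho>"
begin

definition new_balls :: "nat \<Rightarrow> 'a set \<Rightarrow> 'a \<Rightarrow> 'a set" where
  "new_balls n A s = \<Union>{ball c (layer_radius n) | c.
     centre c = s \<and> c \<notin> A \<and> ball c (3 * layer_radius n) \<subseteq> ball s \<rho>}"

primrec covered :: "nat \<Rightarrow> 'a set" where
  "covered 0 = {}"
| "covered (Suc n) = covered n \<union> (\<Union>s. new_balls n (covered n) s)"

definition layer :: "nat \<Rightarrow> 'a \<Rightarrow> 'a set" where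
  "layer n s = new_balls n (covered n) s"

lemma mem_layer:
  "x \<in> layer n s \<longleftrightarrow> (\<exists>c. centre c = s \<and> c \<notin> covered n \<and>
     ball c (3 * layer_radius n) \<subseteq> ball s \<rho> \<and> x \<in> ball c (layer_radius n))"
  unfolding layer_def new_balls_def by blast

lemma open_layer: "open (layer n s)"
  unfolding layer_def new_balls_def by auto

lemma layer_subset_ball: "layer n s \<subseteq> ball s \<rho>"
proof
  fix x assume "x \<in> layer n s"
  then obtain c where "ball c (3 * layer_radius n) \<subseteq> ball s \<rho>" "x \<in> ball c (layer_radius n)"
    unfolding mem_layer by blast
  moreover have "ball c (layer_radius n) \<subseteq> ball c (3 * layer_radius n)"
    using layer_radius_pos[of n] by (intro subset_ball) auto
  ultimately show "x \<in> ball s \<rho>" by blast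
qed

lemma covered_mono: "m \<le> n \<Longrightarrow> covered m \<subseteq> covered n"
  by (induction n) (auto simp: le_Suc_eq)

lemma layer_subset_covered: "m < n \<Longrightarrow> layer m s \<subseteq> covered n"
  using covered_mono[of "Suc m" n] by (auto simp: layer_def)

lemma covered_imp_layer: "x \<in> covered n \<Longrightarrow> \<exists>k<n. \<exists>s. x \<in> layer k s"
  by (induction n) (auto simp: layer_def less_Suc_eq)

lemma layers_cover: "\<exists>n s. x \<in> layer n s"
proof -
  obtain e where e: "e > 0" "ball x e \<subseteq> ball (centre x) \<rho>"
    using openE[OF open_ball mem_ball_centre[of x]] .
  obtain n where n: "layer_radius n < e/3"
    using ex_layer_radius_less[of "e/3"] e by auto
  show ?thesis
  proof (cases "x \<in> covered n")
    case True
    then show ?thesis using covered_imp_layer by blast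
  next
    case False
    have "ball x (3 * layer_radius n) \<subseteq> ball x e"
      using n by (intro subset_ball) linarith
    then have "x \<in> layer n (centre x)"
      unfolding mem_layer using False e layer_radius_pos[of n] by (intro exI[of _ x]) auto
    then show ?thesis by blast
  qed
qed

text \<open>For \<open>i > n\<close>, layer \<open>i\<close> consists of balls centred outside \<open>covered i \<supseteq> layer n s\<close>.\<close>

lemma late_layer_disjoint:
  assumes inside: "ball x (layer_radius j) \<subseteq> layer n s" and "n < i"
    and small: "\<delta> + layer_radius i \<le> layer_radius j"
  shows "layer i t \<inter> ball x \<delta> = {}"
proof (rule ccontr)
  assume "layer i t \<inter> ball x \<delta> \<noteq> {}"
  then obtain q c where q: "dist x q < \<delta>" and c: "c \<notin> covered i" "dist c q < layer_radius i"
    by (auto simp: mem_layer)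
  have "c \<notin> ball x (layer_radius j)"
    using c(1) inside layer_subset_covered[OF \<open>n < i\<close>] by blast
  moreover have "dist x c \<le> dist x q + dist c q"
    using dist_triangle[of x c q] by (simp add: dist_commute)
  ultimately show False using q c(2) small by simp
qed

text \<open>Balls of one layer belonging to different centres have midpoints at least
  \<open>3 * layer_radius n\<close> apart, since they lie that deep inside \<open>\<rho>\<close>-balls separated by
  \<open>centres_separate\<close>.\<close>

lemma layer_meets_small_ball_unique:
  assumes t: "layer n t \<inter> ball x \<delta> \<noteq> {}" and u: "layer n u \<inter> ball x \<delta> \<noteq> {}"
    and small: "2 * \<delta> \<le> layer_radius n"
  shows "t = u"
proof (rule ccontr)
  assume "t \<noteq> u"
  obtain q where "q \<in> layer n t" "dist x q < \<delta>" using t by auto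
  then obtain c where c: "centre c = t" "ball c (3 * layer_radius n) \<subseteq> ball t \<rho>"
    "dist c q < layer_radius n" "dist x q < \<delta>"
    unfolding mem_layer by auto
  obtain q' where "q' \<in> layer n u" "dist x q' < \<delta>" using u by auto
  then obtain c' where c': "centre c' = u" "ball c' (3 * layer_radius n) \<subseteq> ball u \<rho>"
    "dist c' q' < layer_radius n" "dist x q' < \<delta>"
    unfolding mem_layer by auto
  have "dist c c' \<le> dist c q + dist x q + dist x q' + dist c' q'"
    using dist_triangle[of c c' q] dist_triangle[of q c' x] dist_triangle[of x c' q']
    by (simp add: dist_commute)
  then have "dist c c' < 3 * layer_radius n" "dist c' c < 3 * layer_radius n"
    using c c' small by (simp_all add: dist_commute)
  then have "c' \<in> ball t \<rho>" "c \<in> ball u \<rho>"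
    using c(2) c'(2) by auto
  then show False
    using centres_separate[of c c'] \<open>t \<noteq> u\<close> c(1) c'(1) by auto
qed

lemma layers_locally_finite:
  "\<exists>V. open V \<and> x \<in> V \<and> finite {W \<in> range (case_prod layer). W \<inter> V \<noteq> {}}"
proof -
  obtain n s where "x \<in> layer n s" using layers_cover by blast
  then obtain e where e: "e > 0" "ball x e \<subseteq> layer n s"
    using openE[OF open_layer] by metis
  obtain j where "layer_radius j < e" using ex_layer_radius_less e by blast
  then have inside: "ball x (layer_radius j) \<subseteq> layer n s"
    using e by (meson dual_order.trans less_imp_le subset_ball)
  define m where "m = Suc (n + j)"
  define V where "V = ball x (layer_radius m)"
  have twice: "2 * layer_radius m \<le> layer_radius i" if "i \<le> n + j" for i
    using layer_radius_antimono[OF that] by (simp add: m_def layer_radius_Suc)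
  have late: "layer i t \<inter> V = {}" if "m \<le> i" for i t
    unfolding V_def
  proof (rule late_layer_disjoint[OF inside])
    show "n < i" using that by (simp add: m_def)
    show "layer_radius m + layer_radius i \<le> layer_radius j"
      using twice[of j] layer_radius_antimono[OF that] by simp
  qed
  define T where "T i = (SOME t. layer i t \<inter> V \<noteq> {})" for i
  have "{W \<in> range (case_prod layer). W \<inter> V \<noteq> {}} \<subseteq> (\<lambda>i. layer i (T i)) ` {..<m}"
  proof clarify
    fix i t assume meets: "layer i t \<inter> V \<noteq> {}"
    then have "i < m" using late by (meson not_le)
    moreover have "layer i (T i) \<inter> V \<noteq> {}"
      unfolding T_def by (rule someI[of _ t]) (rule meets)
    ultimately have "T i = t"
      using meets twice[of i] unfolding V_def m_def
      by (intro layer_meets_small_ball_unique) auto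
    with \<open>i < m\<close> show "layer i t \<in> (\<lambda>i. layer i (T i)) ` {..<m}" by blast
  qed
  then have "finite {W \<in> range (case_prod layer). W \<inter> V \<noteq> {}}"
    by (rule finite_subset) simp
  moreover have "open V" "x \<in> V" using layer_radius_pos[of m] by (auto simp: V_def)
  ultimately show ?thesis by blast
qed

end

lemma ex_centre_choice:
  fixes \<rho> :: real
  assumes "\<rho> > 0"
  obtains centre :: "'a::metric_space \<Rightarrow> 'a" where "centre_choice centre \<rho>"
proof -
  obtain r :: "'a rel" where "well_order_on UNIV r" using well_order_on by blast
  then have wf: "wf (r - Id)" and total: "total_on UNIV r"
    by (auto simp: well_order_on_def linear_order_on_def)
  define least where
    "least c = (SOME s. c \<in> ball s \<rho> \<and> (\<forall>t. c \<in> ball t \<rho> \<longrightarrow> (t, s) \<notin> r - Id))" for c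
  have least: "c \<in> ball (least c) \<rho> \<and> (\<forall>t. c \<in> ball t \<rho> \<longrightarrow> (t, least c) \<notin> r - Id)" for c
  proof -
    have "c \<in> {s. c \<in> ball s \<rho>}" using assms by simp
    then obtain z where "z \<in> {s. c \<in> ball s \<rho>}" "\<And>y. (y, z) \<in> r - Id \<Longrightarrow> y \<notin> {s. c \<in> ball s \<rho>}"
      using wfE_min[OF wf] by metis
    then have "c \<in> ball z \<rho> \<and> (\<forall>t. c \<in> ball t \<rho> \<longrightarrow> (t, z) \<notin> r - Id)" by blast
    then show ?thesis unfolding least_def by (rule someI)
  qed
  have "centre_choice least \<rho>"
  proof
    show "c \<in> ball (least c) \<rho>" for c using least by blast
    fix c c' assume "least c \<noteq> least c'"
    then have "(least c, least c') \<in> r - Id \<or> (least c', least c) \<in> r - Id"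
      using total by (auto simp: total_on_def)
    then show "c' \<notin> ball (least c) \<rho> \<or> c \<notin> ball (least c') \<rho>"
      using least by blast
  qed
  then show ?thesis by (rule that)
qed

lemma ex_locally_finite_refinement_of_balls:
  fixes \<rho> :: real
  assumes "\<rho> > 0"
  obtains \<W> :: "'a::metric_space set set"
  where "\<forall>W\<in>\<W>. open W \<and> (\<exists>s. W \<subseteq> ball s \<rho>)" and "\<Union>\<W> = UNIV"
    and "\<forall>x. \<exists>V. open V \<and> x \<in> V \<and> finite {W\<in>\<W>. W \<inter> V \<noteq> {}}"
proof -
  obtain centre :: "'a \<Rightarrow> 'a" where "centre_choice centre \<rho>"
    using ex_centre_choice[OF assms] by blast
  then interpret centre_choice centre \<rho> .
  show ?thesis
  proof (rule that[of "range (case_prod layer)"])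
    show "\<forall>W \<in> range (case_prod layer). open W \<and> (\<exists>s. W \<subseteq> ball s \<rho>)"
      using open_layer layer_subset_ball by fastforce
    show "\<Union> (range (case_prod layer)) = UNIV"
      using layers_cover by fast
  qed (use layers_locally_finite in blast)
qed

lemma locally_finite_open_cover_restrict:
  assumes "\<And>W. W \<in> \<W> \<Longrightarrow> open W" and "X \<subseteq> \<Union>\<W>"
    and "\<And>x. \<exists>V. open V \<and> x \<in> V \<and> finite {W\<in>\<W>. W \<inter> V \<noteq> {}}"
  shows "locally_finite_open_cover X ((\<lambda>W. W \<inter> X) ` \<W>)"
  unfolding locally_finite_open_cover_def
proof (intro conjI ballI)
  show "openin (top_of_set X) U" if "U \<in> (\<lambda>W. W \<inter> X) ` \<W>" for U
    using that assms(1) by (auto simp: openin_open)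
  show "\<Union> ((\<lambda>W. W \<inter> X) ` \<W>) = X" using assms(2) by blast
  fix x
  obtain V where V: "open V" "x \<in> V" "finite {W\<in>\<W>. W \<inter> V \<noteq> {}}" using assms(3) by blast
  have "{U \<in> (\<lambda>W. W \<inter> X) ` \<W>. U \<inter> (V \<inter> X) \<noteq> {}} \<subseteq> (\<lambda>W. W \<inter> X) ` {W\<in>\<W>. W \<inter> V \<noteq> {}}"
    by blast
  then have "finite {U \<in> (\<lambda>W. W \<inter> X) ` \<W>. U \<inter> (V \<inter> X) \<noteq> {}}"
    using finite_subset V(3) by blast
  moreover assume "x \<in> X"
  ultimately show "\<exists>V'. openin (top_of_set X) V' \<and> x \<in> V' \<and>
      finite {U \<in> (\<lambda>W. W \<inter> X) ` \<W>. U \<inter> V' \<noteq> {}}"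
    using V by (intro exI[of _ "V \<inter> X"]) (auto simp: openin_open)
qed

definition with_coord0 :: "real \<Rightarrow> real^'n::finite \<Rightarrow> real^'n" where
  "with_coord0 a x = (\<chi> j. if j = coord0 then a else x $ j)"

lemma with_coord0_nth [simp]: "with_coord0 a x $ j = (if j = coord0 then a else x $ j)"
  by (simp add: with_coord0_def)

lemma with_coord0_with_coord0 [simp]: "with_coord0 a (with_coord0 b x) = with_coord0 a x"
  by (simp add: vec_eq_iff)

lemma with_coord0_self [simp]: "with_coord0 (x $ coord0) x = x"
  by (simp add: vec_eq_iff)

lemma loop_concat_eq:
  "loop_concat f g x = (if x $ coord0 \<le> 1/2 then f (with_coord0 (2 * x $ coord0) x)
     else g (with_coord0 (2 * x $ coord0 - 1) x))"
  by (simp add: loop_concat_def with_coord0_def)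

lemma mem_ncube: "x \<in> ncube \<longleftrightarrow> (\<forall>j. 0 \<le> x $ j \<and> x $ j \<le> 1)"
  by (simp add: ncube_def mem_box_cart)

lemma mem_nbdry: "x \<in> nbdry \<longleftrightarrow> x \<in> ncube \<and> (\<exists>j. x $ j = 0 \<or> x $ j = 1)"
  by (auto simp: nbdry_def ncube_def mem_box_cart order.strict_iff_order)

lemma nbdry_subset_ncube: "nbdry \<subseteq> ncube"
  by (auto simp: nbdry_def ncube_def)

lemma zero_in_nbdry: "0 \<in> nbdry"
  by (simp add: mem_nbdry mem_ncube)

lemma zero_in_ncube: "0 \<in> ncube"
  using zero_in_nbdry nbdry_subset_ncube by blast

lemma with_coord0_in_ncube: "x \<in> ncube \<Longrightarrow> 0 \<le> a \<Longrightarrow> a \<le> 1 \<Longrightarrow> with_coord0 a x \<in> ncube"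
  by (simp add: mem_ncube)

lemma with_coord0_in_nbdry_end: "x \<in> ncube \<Longrightarrow> a = 0 \<or> a = 1 \<Longrightarrow> with_coord0 a x \<in> nbdry"
  unfolding mem_nbdry by (intro conjI with_coord0_in_ncube exI[of _ coord0]) auto

lemma with_coord0_in_nbdry:
  assumes x: "x \<in> nbdry" and a: "0 \<le> a" "a \<le> 1"
    and ends: "x $ coord0 = 0 \<or> x $ coord0 = 1 \<Longrightarrow> a = 0 \<or> a = 1"
  shows "with_coord0 a x \<in> nbdry"
proof -
  have cube: "x \<in> ncube" using x nbdry_subset_ncube by blast
  obtain j where j: "x $ j = 0 \<or> x $ j = 1" using x by (auto simp: mem_nbdry)
  show ?thesis
  proof (cases "j = coord0")
    case True
    then show ?thesis using ends j cube with_coord0_in_nbdry_end by blast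
  next
    case False
    then show ?thesis
      using j with_coord0_in_ncube[OF cube a] unfolding mem_nbdry by (intro conjI exI[of _ j]) auto
  qed
qed

lemma continuous_on_with_coord0 [continuous_intros]:
  assumes "continuous_on S a" "continuous_on S g"
  shows "continuous_on S (\<lambda>z. with_coord0 (a z) (g z))"
  unfolding with_coord0_def
proof (rule continuous_on_vec_lambda)
  fix j show "continuous_on S (\<lambda>z. if j = coord0 then a z else g z $ j)"
    by (cases "j = coord0") (simp_all add: assms continuous_on_component)
qed

lemma convex_ncube: "convex ncube"
  by (simp add: ncube_def)

section \<open>Based homotopies and homotopy classes\<close>

lemma nloop_continuous: "nloop X p f \<Longrightarrow> continuous_on ncube f"
  by (simp add: nloop_def)

lemma nloop_in: "nloop X p f \<Longrightarrow> x \<in> ncube \<Longrightarrow> f x \<in> X"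
  by (auto simp: nloop_def)

lemma nloop_boundary: "nloop X p f \<Longrightarrow> x \<in> nbdry \<Longrightarrow> f x = p"
  by (auto simp: nloop_def)

lemma nloop_const: "p \<in> X \<Longrightarrow> nloop X p (\<lambda>x. p)"
  by (auto simp: nloop_def)

lemma boundary_condition_cong:
  assumes "\<And>x. x \<in> topspace (top_of_set ncube) \<Longrightarrow> h x = k x"
  shows "(\<forall>x\<in>nbdry. h x = p) \<longleftrightarrow> (\<forall>x\<in>nbdry. k x = p)"
  using assms nbdry_subset_ncube by (metis subsetD topspace_euclidean_subtopology)

lemma based_homotopic_iff:
  "based_homotopic X p f g \<longleftrightarrow>
    (\<exists>K. continuous_on ({0..1::real} \<times> ncube) K \<and> K ` ({0..1} \<times> ncube) \<subseteq> X \<and>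
       (\<forall>x\<in>ncube. K (0, x) = f x \<and> K (1, x) = g x) \<and> (\<forall>t\<in>{0..1}. \<forall>x\<in>nbdry. K (t, x) = p))"
proof -
  have "based_homotopic X p f g \<longleftrightarrow>
      (\<exists>h. continuous_map (prod_topology (top_of_set {0..1::real}) (top_of_set ncube)) (top_of_set X) h \<and>
         (\<forall>x \<in> topspace (top_of_set ncube). h (0, x) = f x) \<and>
         (\<forall>x \<in> topspace (top_of_set ncube). h (1, x) = g x) \<and>
         (\<forall>t \<in> {0..1}. \<forall>x\<in>nbdry. h (t, x) = p))"
    unfolding based_homotopic_def by (rule homotopic_with) (rule boundary_condition_cong)
  then show ?thesis
    unfolding prod_topology_subtopology_eu continuous_map_subtopology_eu
      topspace_euclidean_subtopology image_subset_iff_funcset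
    by (simp only: conj_assoc ball_conj_distrib)
qed

lemma based_homotopic_imp_nloop:
  assumes "based_homotopic X p f g"
  shows "nloop X p f" "nloop X p g"
proof -
  have h: "homotopic_with_canon (\<lambda>h. \<forall>x\<in>nbdry. h x = p) ncube X f g"
    using assms by (simp add: based_homotopic_def)
  show "nloop X p f" "nloop X p g"
    unfolding nloop_def
    using homotopic_with_imp_continuous[OF h] homotopic_with_imp_subset1[OF h]
      homotopic_with_imp_subset2[OF h] homotopic_with_imp_property[OF h] by auto
qed

lemma based_homotopic_refl: "nloop X p f \<Longrightarrow> based_homotopic X p f f"
  unfolding based_homotopic_def nloop_def
  by (simp add: continuous_map_subtopology_eu image_subset_iff Pi_iff)

lemma based_homotopic_sym: "based_homotopic X p f g \<Longrightarrow> based_homotopic X p g f"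
  unfolding based_homotopic_def by (rule homotopic_with_symD)

lemma based_homotopic_trans:
  "based_homotopic X p f g \<Longrightarrow> based_homotopic X p g h \<Longrightarrow> based_homotopic X p f h"
  unfolding based_homotopic_def by (rule homotopic_with_trans)

lemma based_homotopic_cong:
  assumes "based_homotopic X p f g"
    and "\<And>x. x \<in> ncube \<Longrightarrow> f' x = f x" and "\<And>x. x \<in> ncube \<Longrightarrow> g' x = g x"
  shows "based_homotopic X p f' g'"
  unfolding based_homotopic_def
proof (rule homotopic_with_eq[OF assms(1)[unfolded based_homotopic_def]])
  show "f' x = f x" "g' x = g x" if "x \<in> topspace (top_of_set ncube)" for x
    using that assms(2,3) by auto
qed (rule boundary_condition_cong)

lemma loop_class_eq: "based_homotopic X p f g \<Longrightarrow> loop_class X p f = loop_class X p g"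
  unfolding loop_class_def
  by (meson based_homotopic_sym based_homotopic_trans)

lemma mem_loop_class_self: "nloop X p f \<Longrightarrow> f \<in> loop_class X p f"
  unfolding loop_class_def by (simp add: based_homotopic_refl)

lemma loop_class_eq_of_mem: "g \<in> loop_class X p f \<Longrightarrow> loop_class X p g = loop_class X p f"
  using loop_class_eq[of X p f g] by (simp add: loop_class_def)

lemma nloop_of_mem_loop_class: "g \<in> loop_class X p f \<Longrightarrow> nloop X p g"
  unfolding loop_class_def by blast

section \<open>Concatenation and reparametrisation of loops\<close>

lemma first_half_in_ncube: "x \<in> ncube \<Longrightarrow> x $ coord0 \<le> 1/2 \<Longrightarrow> with_coord0 (2 * x $ coord0) x \<in> ncube"
  by (rule with_coord0_in_ncube) (auto simp: mem_ncube)

lemma second_half_in_ncube: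
  "x \<in> ncube \<Longrightarrow> \<not> x $ coord0 \<le> 1/2 \<Longrightarrow> with_coord0 (2 * x $ coord0 - 1) x \<in> ncube"
  by (rule with_coord0_in_ncube) (auto simp: mem_ncube)

lemma first_half_in_nbdry: "x \<in> nbdry \<Longrightarrow> x $ coord0 \<le> 1/2 \<Longrightarrow> with_coord0 (2 * x $ coord0) x \<in> nbdry"
  by (rule with_coord0_in_nbdry) (auto simp: mem_nbdry mem_ncube)

lemma second_half_in_nbdry:
  "x \<in> nbdry \<Longrightarrow> \<not> x $ coord0 \<le> 1/2 \<Longrightarrow> with_coord0 (2 * x $ coord0 - 1) x \<in> nbdry"
  by (rule with_coord0_in_nbdry) (auto simp: mem_nbdry mem_ncube)

lemma continuous_on_loop_concat_homotopy:
  fixes F G :: "real \<times> (real^'n::finite) \<Rightarrow> 'a::metric_space"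
  assumes F: "continuous_on ({0..1} \<times> ncube) F" "\<And>t y. t \<in> {0..1} \<Longrightarrow> y \<in> nbdry \<Longrightarrow> F (t, y) = p"
    and G: "continuous_on ({0..1} \<times> ncube) G" "\<And>t y. t \<in> {0..1} \<Longrightarrow> y \<in> nbdry \<Longrightarrow> G (t, y) = p"
  shows "continuous_on ({0..1} \<times> ncube) (\<lambda>z. loop_concat (\<lambda>y. F (fst z, y)) (\<lambda>y. G (fst z, y)) (snd z))"
proof -
  let ?A = "{0..1::real} \<times> (ncube :: (real^'n) set)"
  define A1 where "A1 = ?A \<inter> {z. snd z $ coord0 \<le> 1/2}"
  define A2 where "A2 = ?A \<inter> {z. 1/2 \<le> snd z $ coord0}"
  have "continuous_on UNIV (\<lambda>z::real \<times> (real^'n). snd z $ coord0)"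
    by (intro continuous_on_component continuous_intros)
  moreover have "closed ?A" unfolding ncube_def by (intro closed_Times closed_atLeastAtMost closed_cbox)
  ultimately have closed: "closed A1" "closed A2" unfolding A1_def A2_def
    by (intro closed_Int closed_Collect_le continuous_on_const; simp)+
  have "continuous_on A1 (\<lambda>z. F (fst z, with_coord0 (2 * snd z $ coord0) (snd z)))"
    by (rule continuous_on_compose2[OF F(1)])
      (auto simp: A1_def intro!: continuous_intros continuous_on_component first_half_in_ncube)
  moreover have "continuous_on A2 (\<lambda>z. G (fst z, with_coord0 (2 * snd z $ coord0 - 1) (snd z)))"
    by (rule continuous_on_compose2[OF G(1)])
      (auto simp: A2_def mem_ncube intro!: continuous_intros continuous_on_component)
  ultimately have "continuous_on (A1 \<union> A2) (\<lambda>z. if snd z $ coord0 \<le> 1/2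
      then F (fst z, with_coord0 (2 * snd z $ coord0) (snd z))
      else G (fst z, with_coord0 (2 * snd z $ coord0 - 1) (snd z)))"
  proof (rule continuous_on_cases[OF closed], intro allI impI)
    fix z assume "z \<in> A1 \<and> \<not> snd z $ coord0 \<le> 1/2 \<or> z \<in> A2 \<and> snd z $ coord0 \<le> 1/2"
    then have z: "snd z $ coord0 = 1/2" "fst z \<in> {0..1}" "snd z \<in> ncube" by (auto simp: A1_def A2_def)
    then show "F (fst z, with_coord0 (2 * snd z $ coord0) (snd z)) =
        G (fst z, with_coord0 (2 * snd z $ coord0 - 1) (snd z))"
      using F(2) G(2) with_coord0_in_nbdry_end[OF z(3)] by simp
  qed
  moreover have "?A = A1 \<union> A2" by (auto simp: A1_def A2_def)
  ultimately show ?thesis by (simp add: loop_concat_eq)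
qed

lemma loop_concat_cong:
  assumes "\<And>y. y \<in> ncube \<Longrightarrow> f y = f' y" "\<And>y. y \<in> ncube \<Longrightarrow> g y = g' y" "x \<in> ncube"
  shows "loop_concat f g x = loop_concat f' g' x"
  using assms first_half_in_ncube[OF assms(3)] second_half_in_ncube[OF assms(3)]
  by (simp add: loop_concat_eq)

lemma nloop_concat:
  fixes f g :: "real^'n::finite \<Rightarrow> 'a::metric_space"
  assumes f: "nloop X p f" and g: "nloop X p g"
  shows "nloop X p (loop_concat f g)"
proof -
  have "continuous_on ({0..1} \<times> ncube) (\<lambda>z::real \<times> (real^'n). f (snd z))"
    "continuous_on ({0..1} \<times> ncube) (\<lambda>z::real \<times> (real^'n). g (snd z))"
    by (auto intro!: continuous_on_compose2[OF nloop_continuous[OF f]]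
        continuous_on_compose2[OF nloop_continuous[OF g]] continuous_intros)
  from continuous_on_loop_concat_homotopy[OF this(1) _ this(2), of p]
  have "continuous_on ({0..1} \<times> ncube) (\<lambda>z::real \<times> (real^'n). loop_concat f g (snd z))"
    using nloop_boundary[OF f] nloop_boundary[OF g] by simp
  then have "continuous_on ncube (\<lambda>x. loop_concat f g (snd (0::real, x)))"
    by (rule continuous_on_compose2) (auto intro: continuous_intros)
  moreover have "loop_concat f g x \<in> X" if "x \<in> ncube" for x
    using f g first_half_in_ncube[OF that] second_half_in_ncube[OF that]
    by (simp add: loop_concat_eq nloop_in)
  moreover have "loop_concat f g x = p" if "x \<in> nbdry" for x
    using f g first_half_in_nbdry[OF that] second_half_in_nbdry[OF that]
    by (simp add: loop_concat_eq nloop_boundary)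
  ultimately show ?thesis unfolding nloop_def by auto
qed

lemma based_homotopic_loop_concat:
  fixes f f' g g' :: "real^'n::finite \<Rightarrow> 'a::metric_space"
  assumes "based_homotopic X p f f'" "based_homotopic X p g g'"
  shows "based_homotopic X p (loop_concat f g) (loop_concat f' g')"
proof -
  obtain K1 where K1: "continuous_on ({0..1::real} \<times> ncube) K1" "K1 ` ({0..1} \<times> ncube) \<subseteq> X"
      "\<forall>x\<in>ncube. K1 (0, x) = f x \<and> K1 (1, x) = f' x" "\<forall>t\<in>{0..1}. \<forall>x\<in>nbdry. K1 (t, x) = p"
    using assms(1) unfolding based_homotopic_iff by blast
  obtain K2 where K2: "continuous_on ({0..1::real} \<times> ncube) K2" "K2 ` ({0..1} \<times> ncube) \<subseteq> X"
      "\<forall>x\<in>ncube. K2 (0, x) = g x \<and> K2 (1, x) = g' x" "\<forall>t\<in>{0..1}. \<forall>x\<in>nbdry. K2 (t, x) = p"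
    using assms(2) unfolding based_homotopic_iff by blast
  let ?L = "\<lambda>z. loop_concat (\<lambda>y. K1 (fst z, y)) (\<lambda>y. K2 (fst z, y)) (snd z)"
  have "continuous_on ({0..1} \<times> ncube) ?L"
    by (rule continuous_on_loop_concat_homotopy) (use K1 K2 in auto)
  moreover have "?L ` ({0..1} \<times> ncube) \<subseteq> X"
  proof clarify
    fix t :: real and x :: "real^'n" assume tx: "t \<in> {0..1}" "x \<in> ncube"
    show "?L (t, x) \<in> X"
      using K1(2) K2(2) tx first_half_in_ncube[OF tx(2)] second_half_in_ncube[OF tx(2)]
      by (auto simp: loop_concat_eq)
  qed
  moreover have "\<forall>x\<in>ncube. ?L (0, x) = loop_concat f g x \<and> ?L (1, x) = loop_concat f' g' x"
    using K1(3) K2(3) by (auto intro: loop_concat_cong)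
  moreover have "\<forall>t\<in>{0..1}. \<forall>x\<in>nbdry. ?L (t, x) = p"
  proof (intro ballI)
    fix t :: real and x :: "real^'n" assume "t \<in> {0..1}" "x \<in> nbdry"
    then show "?L (t, x) = p"
      using K1(4) K2(4) first_half_in_nbdry[of x] second_half_in_nbdry[of x]
      by (simp add: loop_concat_eq)
  qed
  ultimately show ?thesis unfolding based_homotopic_iff by blast
qed

lemma convex_combination_in_unit_interval:
  fixes t a b :: real
  assumes "t \<in> {0..1}" "a \<in> {0..1}" "b \<in> {0..1}"
  shows "(1 - t) * a + t * b \<in> {0..1}"
proof -
  have "(1 - t) * a \<le> 1 - t" "t * b \<le> t" using assms by (auto intro: mult_left_le)
  moreover have "0 \<le> (1 - t) * a" "0 \<le> t * b" using assms by auto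
  ultimately show ?thesis by auto
qed

lemma based_homotopic_reparam:
  fixes f :: "real^'n::finite \<Rightarrow> 'a::metric_space"
  assumes f: "nloop X p f"
    and \<phi>: "continuous_on {0..1} \<phi>" "\<phi> ` {0..1} \<subseteq> {0..1}"
    and \<psi>: "continuous_on {0..1} \<psi>" "\<psi> ` {0..1} \<subseteq> {0..1}"
    and ends: "\<phi> 0 = \<psi> 0" "\<phi> 0 \<in> {0, 1}" "\<phi> 1 = \<psi> 1" "\<phi> 1 \<in> {0, 1}"
  shows "based_homotopic X p (\<lambda>x. f (with_coord0 (\<phi> (x $ coord0)) x))
    (\<lambda>x. f (with_coord0 (\<psi> (x $ coord0)) x))"
proof -
  let ?A = "{0..1::real} \<times> (ncube :: (real^'n) set)"
  define a where "a z = (1 - fst z) * \<phi> (snd z $ coord0) + fst z * \<psi> (snd z $ coord0)"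
    for z :: "real \<times> (real^'n)"
  define K where "K z = f (with_coord0 (a z) (snd z))" for z
  have coord: "snd z $ coord0 \<in> {0..1}" if "z \<in> ?A" for z using that by (auto simp: mem_ncube)
  have a: "a z \<in> {0..1}" if "z \<in> ?A" for z
    unfolding a_def using that \<phi>(2) \<psi>(2) coord[OF that]
    by (intro convex_combination_in_unit_interval) (auto simp: image_subset_iff)
  have cube: "with_coord0 (a z) (snd z) \<in> ncube" if "z \<in> ?A" for z
    using that a[OF that] by (intro with_coord0_in_ncube) auto
  have "continuous_on ?A (\<lambda>z. \<phi> (snd z $ coord0))" "continuous_on ?A (\<lambda>z. \<psi> (snd z $ coord0))"
    by (auto intro!: continuous_on_compose2[OF \<phi>(1)] continuous_on_compose2[OF \<psi>(1)]
        continuous_intros simp: mem_ncube)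
  then have "continuous_on ?A a"
    unfolding a_def by (intro continuous_intros)
  with cube have "continuous_on ?A K"
    unfolding K_def by (auto intro!: continuous_on_compose2[OF nloop_continuous[OF f]] continuous_intros)
  moreover have "K ` ?A \<subseteq> X" using nloop_in[OF f] cube unfolding K_def by auto
  moreover have "\<forall>t\<in>{0..1}. \<forall>x\<in>nbdry. K (t, x) = p"
  proof (intro ballI)
    fix t :: real and x :: "real^'n" assume t: "t \<in> {0..1}" and x: "x \<in> nbdry"
    have "(t, x) \<in> ?A" using t x nbdry_subset_ncube by auto
    then have "with_coord0 (a (t, x)) x \<in> nbdry"
      using a ends by (intro with_coord0_in_nbdry[OF x]) (auto simp: a_def algebra_simps)
    then show "K (t, x) = p" unfolding K_def using nloop_boundary[OF f] by simp
  qed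
  ultimately show ?thesis unfolding based_homotopic_iff by (intro exI[of _ K]) (simp add: K_def a_def)
qed

definition loop_rev :: "(real^'n::finite \<Rightarrow> 'a) \<Rightarrow> real^'n \<Rightarrow> 'a" where
  "loop_rev f x = f (with_coord0 (1 - x $ coord0) x)"

lemma loop_rev_loop_rev [simp]: "loop_rev (loop_rev f) = f"
  by (simp add: loop_rev_def fun_eq_iff)

lemma reflect_in_ncube: "x \<in> ncube \<Longrightarrow> with_coord0 (1 - x $ coord0) x \<in> ncube"
  by (rule with_coord0_in_ncube) (auto simp: mem_ncube)

lemma nloop_loop_rev:
  assumes "nloop X p f"
  shows "nloop X p (loop_rev f)"
proof -
  have "based_homotopic X p (loop_rev f) (loop_rev f)"
    unfolding loop_rev_def by (rule based_homotopic_reparam[OF assms]) (auto intro!: continuous_intros)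
  then show ?thesis by (rule based_homotopic_imp_nloop)
qed

section \<open>The homotopy group\<close>

lemma based_homotopic_const_concat:
  fixes f :: "real^'n::finite \<Rightarrow> 'a::metric_space"
  assumes f: "nloop X p f"
  shows "based_homotopic X p (loop_concat (\<lambda>x. p) f) f"
proof -
  have "based_homotopic X p (\<lambda>x. f (with_coord0 (max (2 * x $ coord0 - 1) 0) x))
      (\<lambda>x. f (with_coord0 (x $ coord0) x))"
    by (rule based_homotopic_reparam[OF f]) (auto intro!: continuous_intros)
  then show ?thesis
  proof (rule based_homotopic_cong)
    fix x :: "real^'n" assume "x \<in> ncube"
    then have "f (with_coord0 0 x) = p"
      using nloop_boundary[OF f with_coord0_in_nbdry_end] by simp
    then show "loop_concat (\<lambda>x. p) f x = f (with_coord0 (max (2 * x $ coord0 - 1) 0) x)"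
      by (simp add: loop_concat_eq max_def)
  qed simp
qed

lemma based_homotopic_concat_rev:
  fixes f :: "real^'n::finite \<Rightarrow> 'a::metric_space"
  assumes f: "nloop X p f"
  shows "based_homotopic X p (loop_concat f (loop_rev f)) (\<lambda>x. p)"
proof -
  have "based_homotopic X p (\<lambda>x. f (with_coord0 (min (2 * x $ coord0) (2 - 2 * x $ coord0)) x))
      (\<lambda>x. f (with_coord0 0 x))"
  proof (rule based_homotopic_reparam[OF f])
    show "(\<lambda>s. min (2 * s) (2 - 2 * s)) ` {0..1} \<subseteq> {0..1::real}" by (auto simp: min_def)
  qed (auto intro!: continuous_intros)
  then show ?thesis
  proof (rule based_homotopic_cong)
    fix x :: "real^'n" assume "x \<in> ncube"
    show "loop_concat f (loop_rev f) x = f (with_coord0 (min (2 * x $ coord0) (2 - 2 * x $ coord0)) x)"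
      by (simp add: loop_concat_eq loop_rev_def min_def)
    show "p = f (with_coord0 0 x)"
      using nloop_boundary[OF f with_coord0_in_nbdry_end[OF \<open>x \<in> ncube\<close>]] by simp
  qed
qed

lemma based_homotopic_concat_assoc:
  fixes f g h :: "real^'n::finite \<Rightarrow> 'a::metric_space"
  assumes f: "nloop X p f" and g: "nloop X p g" and h: "nloop X p h"
  shows "based_homotopic X p (loop_concat (loop_concat f g) h) (loop_concat f (loop_concat g h))"
proof -
  let ?W = "loop_concat f (loop_concat g h)"
  define \<phi> where "\<phi> s = min (min (2 * s) (s + 1/4)) (s/2 + 1/2)" for s :: real
  have "based_homotopic X p (\<lambda>x. ?W (with_coord0 (\<phi> (x $ coord0)) x)) (\<lambda>x. ?W (with_coord0 (x $ coord0) x))"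
  proof (rule based_homotopic_reparam)
    show "nloop X p ?W" using f g h by (intro nloop_concat)
    show "continuous_on {0..1} \<phi>" unfolding \<phi>_def by (intro continuous_intros) auto
    show "\<phi> ` {0..1} \<subseteq> {0..1}" by (auto simp: \<phi>_def min_def)
  qed (auto simp: \<phi>_def)
  then show ?thesis
  proof (rule based_homotopic_cong)
    fix x :: "real^'n"
    define s where "s = x $ coord0"
    consider "s \<le> 1/4" | "1/4 < s" "s \<le> 1/2" | "1/2 < s" by linarith
    then show "loop_concat (loop_concat f g) h x = ?W (with_coord0 (\<phi> (x $ coord0)) x)"
      unfolding s_def[symmetric]
      by cases (simp_all add: loop_concat_eq s_def \<phi>_def min_def algebra_simps)
  qed simp
qed

lemma pi_n_one: "\<one>\<^bsub>pi_n X p\<^esub> = loop_class X p (\<lambda>x. p)"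
  by (simp add: pi_n_def)

lemma carrier_pi_n: "carrier (pi_n X p) = pi_n_set X p"
  by (simp add: pi_n_def)

lemma mem_carrier_pi_n: "a \<in> carrier (pi_n X p) \<longleftrightarrow> (\<exists>f. nloop X p f \<and> a = loop_class X p f)"
  by (auto simp: pi_n_def pi_n_set_def)

lemma pi_n_mult:
  assumes f: "nloop X p f" and g: "nloop X p g"
  shows "loop_class X p f \<otimes>\<^bsub>pi_n X p\<^esub> loop_class X p g = loop_class X p (loop_concat f g)"
proof -
  define f' where "f' = (SOME f'. f' \<in> loop_class X p f)"
  define g' where "g' = (SOME g'. g' \<in> loop_class X p g)"
  have "f' \<in> loop_class X p f" "g' \<in> loop_class X p g"
    unfolding f'_def g'_def using mem_loop_class_self f g by (metis someI)+
  then have "based_homotopic X p f f'" "based_homotopic X p g g'"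
    by (simp_all add: loop_class_def)
  then have "loop_class X p (loop_concat f g) = loop_class X p (loop_concat f' g')"
    by (intro loop_class_eq based_homotopic_loop_concat)
  then show ?thesis by (simp add: pi_n_def f'_def g'_def)
qed

lemma pi_n_loop_rev_mult:
  assumes "nloop X p f"
  shows "loop_class X p (loop_rev f) \<otimes>\<^bsub>pi_n X p\<^esub> loop_class X p f = \<one>\<^bsub>pi_n X p\<^esub>"
  using based_homotopic_concat_rev[OF nloop_loop_rev[OF assms]]
  by (simp add: assms pi_n_one pi_n_mult nloop_loop_rev loop_class_eq)

lemma group_pi_n:
  fixes X :: "'a::metric_space set"
  assumes "p \<in> X"
  shows "group (pi_n X p :: (real^'n::finite \<Rightarrow> 'a) set monoid)"
proof (rule groupI)
  show "\<one>\<^bsub>pi_n X p\<^esub> \<in> carrier (pi_n X p)"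
    using nloop_const[OF assms] by (auto simp: pi_n_one mem_carrier_pi_n)
next
  fix a b :: "(real^'n \<Rightarrow> 'a) set" assume "a \<in> carrier (pi_n X p)" "b \<in> carrier (pi_n X p)"
  then obtain f g where "nloop X p f" "nloop X p g" "a = loop_class X p f" "b = loop_class X p g"
    unfolding mem_carrier_pi_n by blast
  then show "a \<otimes>\<^bsub>pi_n X p\<^esub> b \<in> carrier (pi_n X p)"
    unfolding mem_carrier_pi_n by (metis nloop_concat pi_n_mult)
next
  fix a b c :: "(real^'n \<Rightarrow> 'a) set" assume "a \<in> carrier (pi_n X p)" "b \<in> carrier (pi_n X p)" "c \<in> carrier (pi_n X p)"
  then obtain f g h where "nloop X p f" "nloop X p g" "nloop X p h"
    and "a = loop_class X p f" "b = loop_class X p g" "c = loop_class X p h"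
    unfolding mem_carrier_pi_n by blast
  then show "a \<otimes>\<^bsub>pi_n X p\<^esub> b \<otimes>\<^bsub>pi_n X p\<^esub> c = a \<otimes>\<^bsub>pi_n X p\<^esub> (b \<otimes>\<^bsub>pi_n X p\<^esub> c)"
    using loop_class_eq[OF based_homotopic_concat_assoc] by (simp add: pi_n_mult nloop_concat)
next
  fix a :: "(real^'n \<Rightarrow> 'a) set" assume "a \<in> carrier (pi_n X p)"
  then obtain f where f: "nloop X p f" "a = loop_class X p f" unfolding mem_carrier_pi_n by blast
  show "\<one>\<^bsub>pi_n X p\<^esub> \<otimes>\<^bsub>pi_n X p\<^esub> a = a"
    using loop_class_eq[OF based_homotopic_const_concat[OF f(1)]]
    by (simp add: f pi_n_one pi_n_mult nloop_const[OF assms])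
  show "\<exists>b \<in> carrier (pi_n X p). b \<otimes>\<^bsub>pi_n X p\<^esub> a = \<one>\<^bsub>pi_n X p\<^esub>"
    using pi_n_loop_rev_mult[OF f(1)] nloop_loop_rev[OF f(1)] f(2) mem_carrier_pi_n by blast
qed

lemma inv_pi_n:
  assumes "p \<in> X" and f: "nloop X p f"
  shows "inv\<^bsub>pi_n X p\<^esub> loop_class X p f = loop_class X p (loop_rev f)"
  by (rule group.inv_equality[OF group_pi_n[OF assms(1)] pi_n_loop_rev_mult[OF f]])
    (use f nloop_loop_rev[OF f] in \<open>auto simp: mem_carrier_pi_n\<close>)

section \<open>Classes uniformly close to the identity\<close>

lemma dist_le_loop_mu:
  fixes \<alpha> \<beta> :: "real^'n::finite \<Rightarrow> 'a::metric_space"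
  assumes "continuous_on ncube \<alpha>" "continuous_on ncube \<beta>" "x \<in> ncube"
  shows "dist (\<alpha> x) (\<beta> x) \<le> loop_mu \<alpha> \<beta>"
  unfolding loop_mu_def
proof (rule cSUP_upper[OF assms(3)])
  have "compact ((\<lambda>t. dist (\<alpha> t) (\<beta> t)) ` ncube)"
    using assms(1,2) by (auto intro!: compact_continuous_image continuous_intros simp: ncube_def)
  then show "bdd_above ((\<lambda>t. dist (\<alpha> t) (\<beta> t)) ` ncube)"
    by (intro bounded_imp_bdd_above compact_imp_bounded)
qed

lemma loop_mu_le:
  fixes \<alpha> \<beta> :: "real^'n::finite \<Rightarrow> 'a::metric_space"
  assumes "\<And>x. x \<in> ncube \<Longrightarrow> dist (\<alpha> x) (\<beta> x) \<le> c"
  shows "loop_mu \<alpha> \<beta> \<le> c"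
  unfolding loop_mu_def using zero_in_ncube by (intro cSUP_least assms) auto

lemma loop_rho_le_loop_mu:
  fixes \<alpha> \<beta> :: "real^'n::finite \<Rightarrow> 'a::metric_space"
  assumes "\<And>\<alpha>. \<alpha> \<in> a \<Longrightarrow> nloop X p \<alpha>" and "\<And>\<beta>. \<beta> \<in> b \<Longrightarrow> nloop X p \<beta>"
    and "\<alpha> \<in> a" "\<beta> \<in> b"
  shows "loop_rho a b \<le> loop_mu \<alpha> \<beta>"
proof -
  have "0 \<le> loop_mu \<alpha>' \<beta>'" if "\<alpha>' \<in> a" "\<beta>' \<in> b" for \<alpha>' \<beta>'
    using dist_le_loop_mu[of \<alpha>' \<beta>' 0] assms(1,2) that zero_in_ncube
    by (meson nloop_continuous zero_le_dist order_trans)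
  then have "bdd_below ((\<lambda>(\<alpha>, \<beta>). loop_mu \<alpha> \<beta>) ` (a \<times> b))"
    by (auto intro: bdd_belowI[of _ 0])
  then show ?thesis
    unfolding loop_rho_def using assms(3,4) by (auto intro: cINF_lower2)
qed

lemma loop_mu_loop_concat_le:
  fixes \<alpha>1 \<alpha>2 \<beta>1 \<beta>2 :: "real^'n::finite \<Rightarrow> 'a::metric_space"
  assumes "continuous_on ncube \<alpha>1" "continuous_on ncube \<beta>1"
    and "continuous_on ncube \<alpha>2" "continuous_on ncube \<beta>2"
  shows "loop_mu (loop_concat \<alpha>1 \<alpha>2) (loop_concat \<beta>1 \<beta>2) \<le> max (loop_mu \<alpha>1 \<beta>1) (loop_mu \<alpha>2 \<beta>2)"
proof (rule loop_mu_le)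
  fix x :: "real^'n" assume x: "x \<in> ncube"
  show "dist (loop_concat \<alpha>1 \<alpha>2 x) (loop_concat \<beta>1 \<beta>2 x) \<le> max (loop_mu \<alpha>1 \<beta>1) (loop_mu \<alpha>2 \<beta>2)"
    using dist_le_loop_mu[OF assms(1,2) first_half_in_ncube[OF x]]
      dist_le_loop_mu[OF assms(3,4) second_half_in_ncube[OF x]]
    by (auto simp: loop_concat_eq)
qed

lemma loop_mu_loop_rev_le:
  fixes \<alpha> \<beta> :: "real^'n::finite \<Rightarrow> 'a::metric_space"
  assumes "continuous_on ncube \<alpha>" "continuous_on ncube \<beta>"
  shows "loop_mu (loop_rev \<alpha>) (loop_rev \<beta>) \<le> loop_mu \<alpha> \<beta>"
  using dist_le_loop_mu[OF assms reflect_in_ncube] by (auto intro: loop_mu_le simp: loop_rev_def)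

definition near_one :: "'a::metric_space set \<Rightarrow> 'a \<Rightarrow> real \<Rightarrow> (real^'n::finite \<Rightarrow> 'a) set \<Rightarrow> bool" where
  "near_one X p c a \<longleftrightarrow> a \<in> carrier (pi_n X p) \<and> (\<exists>\<alpha>\<in>a. \<exists>\<beta>\<in>\<one>\<^bsub>pi_n X p\<^esub>. loop_mu \<alpha> \<beta> \<le> c)"

lemma loop_rho_le_of_near_one:
  assumes "near_one X p c a"
  shows "loop_rho a \<one>\<^bsub>pi_n X p\<^esub> \<le> c"
proof -
  from assms obtain f \<alpha> \<beta> where "a = loop_class X p f" "\<alpha> \<in> a" "\<beta> \<in> loop_class X p (\<lambda>x. p)"
    and c: "loop_mu \<alpha> \<beta> \<le> c"
    unfolding near_one_def pi_n_one mem_carrier_pi_n by blast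
  then have "loop_rho a \<one>\<^bsub>pi_n X p\<^esub> \<le> loop_mu \<alpha> \<beta>"
    unfolding pi_n_one by (intro loop_rho_le_loop_mu[where X=X and p=p]) (auto dest: nloop_of_mem_loop_class)
  with c show ?thesis by linarith
qed

lemma near_oneI:
  assumes "nloop X p \<alpha>" "nloop X p \<beta>" "loop_class X p \<beta> = \<one>\<^bsub>pi_n X p\<^esub>" "loop_mu \<alpha> \<beta> \<le> c"
  shows "near_one X p c (loop_class X p \<alpha>)"
proof -
  have "\<beta> \<in> \<one>\<^bsub>pi_n X p\<^esub>" using assms(3) mem_loop_class_self[OF assms(2)] by simp
  then show ?thesis
    unfolding near_one_def mem_carrier_pi_n using assms(1,4) mem_loop_class_self[OF assms(1)] by blast
qed

lemma near_oneE:
  assumes "near_one X p c a"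
  obtains \<alpha> \<beta> where "nloop X p \<alpha>" "a = loop_class X p \<alpha>" "nloop X p \<beta>"
    "loop_class X p \<beta> = \<one>\<^bsub>pi_n X p\<^esub>" "loop_mu \<alpha> \<beta> \<le> c"
proof -
  from assms obtain f \<alpha> \<beta> where a: "a = loop_class X p f" "\<alpha> \<in> a"
    and \<beta>: "\<beta> \<in> loop_class X p (\<lambda>x. p)" and c: "loop_mu \<alpha> \<beta> \<le> c"
    unfolding near_one_def pi_n_one mem_carrier_pi_n by blast
  show ?thesis
  proof (rule that)
    show "nloop X p \<alpha>" "nloop X p \<beta>" using a \<beta> by (auto dest: nloop_of_mem_loop_class)
    show "a = loop_class X p \<alpha>" using a loop_class_eq_of_mem by metis
    show "loop_class X p \<beta> = \<one>\<^bsub>pi_n X p\<^esub>" using \<beta> loop_class_eq_of_mem by (simp add: pi_n_one)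
  qed (rule c)
qed

lemma near_one_one:
  assumes "p \<in> X" "0 \<le> c"
  shows "near_one X p c (\<one>\<^bsub>pi_n X p\<^esub> :: (real^'n::finite \<Rightarrow> 'a::metric_space) set)"
  using near_oneI[OF nloop_const nloop_const, of p X c] assms
  by (simp add: pi_n_one loop_mu_le)

lemma near_one_mult:
  fixes a b :: "(real^'n::finite \<Rightarrow> 'a::metric_space) set"
  assumes "p \<in> X" and "near_one X p c a" "near_one X p c b"
  shows "near_one X p c (a \<otimes>\<^bsub>pi_n X p\<^esub> b)"
proof -
  interpret pi: group "pi_n X p :: (real^'n \<Rightarrow> 'a) set monoid" by (rule group_pi_n[OF assms(1)])
  obtain \<alpha>1 \<beta>1 where 1: "nloop X p \<alpha>1" "a = loop_class X p \<alpha>1" "nloop X p \<beta>1"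
    "loop_class X p \<beta>1 = \<one>\<^bsub>pi_n X p\<^esub>" "loop_mu \<alpha>1 \<beta>1 \<le> c"
    using near_oneE[OF assms(2)] by metis
  obtain \<alpha>2 \<beta>2 where 2: "nloop X p \<alpha>2" "b = loop_class X p \<alpha>2" "nloop X p \<beta>2"
    "loop_class X p \<beta>2 = \<one>\<^bsub>pi_n X p\<^esub>" "loop_mu \<alpha>2 \<beta>2 \<le> c"
    using near_oneE[OF assms(3)] by metis
  have "loop_class X p (loop_concat \<beta>1 \<beta>2) = \<one>\<^bsub>pi_n X p\<^esub>"
    using pi_n_mult[OF 1(3) 2(3)] 1(4) 2(4) by simp
  moreover have "loop_mu (loop_concat \<alpha>1 \<alpha>2) (loop_concat \<beta>1 \<beta>2) \<le> c"
    using loop_mu_loop_concat_le[OF nloop_continuous nloop_continuous nloop_continuous nloop_continuous,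
        OF 1(1) 1(3) 2(1) 2(3)] 1(5) 2(5) by simp
  ultimately show ?thesis
    unfolding 1(2) 2(2) pi_n_mult[OF 1(1) 2(1)]
    by (rule near_oneI[OF nloop_concat[OF 1(1) 2(1)] nloop_concat[OF 1(3) 2(3)]])
qed

lemma near_one_inv:
  fixes a :: "(real^'n::finite \<Rightarrow> 'a::metric_space) set"
  assumes "p \<in> X" and "near_one X p c a"
  shows "near_one X p c (inv\<^bsub>pi_n X p\<^esub> a)"
proof -
  interpret pi: group "pi_n X p :: (real^'n \<Rightarrow> 'a) set monoid" by (rule group_pi_n[OF assms(1)])
  obtain \<alpha> \<beta> where ab: "nloop X p \<alpha>" "a = loop_class X p \<alpha>" "nloop X p \<beta>"
    "loop_class X p \<beta> = \<one>\<^bsub>pi_n X p\<^esub>" "loop_mu \<alpha> \<beta> \<le> c"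
    using near_oneE[OF assms(2)] by metis
  have "loop_class X p (loop_rev \<beta>) = \<one>\<^bsub>pi_n X p\<^esub>"
    using inv_pi_n[OF assms(1) ab(3)] ab(4) by simp
  moreover have "loop_mu (loop_rev \<alpha>) (loop_rev \<beta>) \<le> c"
    using loop_mu_loop_rev_le[OF nloop_continuous nloop_continuous, OF ab(1) ab(3)] ab(5) by simp
  ultimately show ?thesis
    unfolding ab(2) inv_pi_n[OF assms(1) ab(1)]
    by (rule near_oneI[OF nloop_loop_rev[OF ab(1)] nloop_loop_rev[OF ab(3)]])
qed

lemma near_one_generate:
  assumes "p \<in> X" and "\<And>a. a \<in> S \<Longrightarrow> near_one X p c a" and "0 \<le> c"
    and "b \<in> generate (pi_n X p :: (real^'n::finite \<Rightarrow> 'a::metric_space) set monoid) S"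
  shows "near_one X p c b"
  using assms(4)
proof induction
  case one
  show ?case using near_one_one[OF assms(1,3)] .
next
  case (incl h)
  then show ?case by (rule assms(2))
next
  case (inv h)
  then show ?case using near_one_inv[OF assms(1) assms(2)] by blast
next
  case (eng h1 h2)
  then show ?case using near_one_mult[OF assms(1)] by blast
qed

section \<open>The radial collar of the cube\<close>

lemma infnorm_cart_Max: "infnorm (x::real^'n) = Max (range (\<lambda>j. \<bar>x $ j\<bar>))"
proof -
  have "{\<bar>x $ j\<bar> |j. j \<in> UNIV} = range (\<lambda>j. \<bar>x $ j\<bar>)" by auto
  then show ?thesis by (simp add: infnorm_cart cSup_eq_Max)
qed

definition centre_dist :: "real^'n::finite \<Rightarrow> real" where
  "centre_dist x = infnorm (x - vec (1/2))"

lemma centre_dist_le_iff: "centre_dist x \<le> a \<longleftrightarrow> (\<forall>j. \<bar>x $ j - 1/2\<bar> \<le> a)"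
  by (simp add: centre_dist_def infnorm_cart_Max)

lemma ex_centre_dist_eq: "\<exists>j. centre_dist x = \<bar>x $ j - 1/2\<bar>"
proof -
  have "centre_dist x \<in> range (\<lambda>j. \<bar>(x - vec (1/2)) $ j\<bar>)"
    unfolding centre_dist_def infnorm_cart_Max by (rule Max_in) auto
  then show ?thesis by auto
qed

lemma abs_le_centre_dist: "\<bar>x $ j - 1/2\<bar> \<le> centre_dist x"
  using centre_dist_le_iff[of x "centre_dist x"] by simp

lemma continuous_on_centre_dist [continuous_intros]:
  "continuous_on S f \<Longrightarrow> continuous_on S (\<lambda>x. centre_dist (f x))"
  unfolding centre_dist_def by (intro continuous_intros)

lemma mem_ncube_iff_centre_dist: "x \<in> ncube \<longleftrightarrow> centre_dist x \<le> 1/2"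
proof -
  have "0 \<le> a \<and> a \<le> 1 \<longleftrightarrow> \<bar>a - 1/2\<bar> \<le> 1/2" for a :: real
    unfolding abs_le_iff by auto
  then show ?thesis unfolding mem_ncube centre_dist_le_iff by blast
qed

lemma mem_nbdry_iff_centre_dist: "x \<in> nbdry \<longleftrightarrow> centre_dist x = 1/2"
proof
  assume x: "x \<in> nbdry"
  then obtain j where "x $ j = 0 \<or> x $ j = 1" by (auto simp: mem_nbdry)
  then have "1/2 \<le> centre_dist x"
    using abs_le_centre_dist[of x j] by auto
  then show "centre_dist x = 1/2"
    using x nbdry_subset_ncube by (auto simp: mem_ncube_iff_centre_dist)
next
  assume x: "centre_dist x = 1/2"
  then obtain j where "\<bar>x $ j - 1/2\<bar> = 1/2" using ex_centre_dist_eq by metis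
  then have "x $ j = 0 \<or> x $ j = 1" by (auto simp: abs_if split: if_splits)
  then show "x \<in> nbdry" using x by (auto simp: mem_nbdry mem_ncube_iff_centre_dist)
qed

text \<open>\<open>radial_point\<close> projects the collar \<open>1/4 \<le> centre_dist x\<close> radially onto the boundary
  and blows the inner cube \<open>centre_dist x \<le> 1/4\<close> up to the whole cube; \<open>collar_time\<close> runs
  from \<open>0\<close> on the boundary to \<open>1\<close> on the inner cube.\<close>

definition collar_time :: "real^'n::finite \<Rightarrow> real" where
  "collar_time x = min 1 (2 - 4 * centre_dist x)"

definition radial_point :: "real^'n::finite \<Rightarrow> real^'n" where
  "radial_point x = vec (1/2) + inverse (max (1/2) (2 * centre_dist x)) *\<^sub>R (x - vec (1/2))"

lemma continuous_on_collar_time [continuous_intros]: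
  "continuous_on S f \<Longrightarrow> continuous_on S (\<lambda>x. collar_time (f x))"
  unfolding collar_time_def by (intro continuous_intros)

lemma continuous_on_radial_point [continuous_intros]:
  "continuous_on S f \<Longrightarrow> continuous_on S (\<lambda>x. radial_point (f x))"
  unfolding radial_point_def by (intro continuous_intros) auto

lemma collar_time_in_unit_interval: "x \<in> ncube \<Longrightarrow> collar_time x \<in> {0..1}"
  by (auto simp: collar_time_def mem_ncube_iff_centre_dist)

lemma collar_time_inner: "centre_dist x \<le> 1/4 \<Longrightarrow> collar_time x = 1"
  by (simp add: collar_time_def)

lemma centre_dist_radial_point:
  "centre_dist (radial_point x) = centre_dist x / max (1/2) (2 * centre_dist x)"
proof -
  let ?d = "max (1/2) (2 * centre_dist x)"
  have "radial_point x - vec (1/2) = inverse ?d *\<^sub>R (x - vec (1/2))"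
    unfolding radial_point_def by (rule add_diff_cancel_left')
  then have "centre_dist (radial_point x) = \<bar>inverse ?d\<bar> * centre_dist x"
    by (simp only: centre_dist_def infnorm_mul)
  also have "\<bar>inverse ?d\<bar> = inverse ?d"
    by (rule abs_of_pos) simp
  finally show ?thesis by (simp only: divide_inverse mult.commute)
qed

lemma radial_point_in_ncube: "radial_point x \<in> ncube"
proof -
  have pos: "0 < max (1/2) (2 * centre_dist x)" by simp
  have "centre_dist x \<le> 1/2 * max (1/2) (2 * centre_dist x)"
    using max.cobounded2[of "1/2" "2 * centre_dist x"] by linarith
  then show ?thesis
    unfolding mem_ncube_iff_centre_dist centre_dist_radial_point pos_divide_le_eq[OF pos] .
qed

lemma radial_point_in_nbdry:
  assumes "1/4 \<le> centre_dist x"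
  shows "radial_point x \<in> nbdry"
proof -
  have "max (1/2) (2 * centre_dist x) = 2 * centre_dist x" using assms by simp
  then show ?thesis using assms by (simp add: mem_nbdry_iff_centre_dist centre_dist_radial_point)
qed

lemma collar_on_nbdry:
  assumes "x \<in> nbdry"
  shows "collar_time x = 0" "radial_point x = x"
proof -
  have "centre_dist x = 1/2" using assms by (simp add: mem_nbdry_iff_centre_dist)
  then have "max (1/2) (2 * centre_dist x) = 1" "collar_time x = 0"
    by (simp_all add: collar_time_def)
  then show "collar_time x = 0" "radial_point x = x"
    unfolding radial_point_def by simp_all
qed

section \<open>Spanier groups of small covers\<close>

lemma based_homotopic_collar:
  fixes H :: "real \<times> (real^'n::finite) \<Rightarrow> 'a::metric_space"
  assumes H: "continuous_on ({0..1} \<times> ncube) H" "H ` ({0..1} \<times> ncube) \<subseteq> X"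
    "\<forall>x\<in>ncube. H (0, x) = g x" "\<forall>t\<in>{0..1}. \<forall>x\<in>nbdry. H (t, x) = \<gamma> t"
    and "\<gamma> 0 = p"
  shows "based_homotopic X p g (\<lambda>x. H (collar_time x, radial_point x))"
  unfolding based_homotopic_iff
proof (intro exI conjI)
  let ?\<sigma> = "\<lambda>z::real \<times> (real^'n). (fst z * collar_time (snd z),
    fst z *\<^sub>R radial_point (snd z) + (1 - fst z) *\<^sub>R snd z)"
  have \<sigma>: "?\<sigma> z \<in> {0..1} \<times> ncube" if "z \<in> {0..1} \<times> ncube" for z
  proof -
    have s: "fst z \<in> {0..1}" and x: "snd z \<in> ncube" using that by auto
    have "fst z * collar_time (snd z) \<in> {0..1}"
      using s collar_time_in_unit_interval[OF x] by (auto intro: mult_le_one)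
    moreover have "fst z *\<^sub>R radial_point (snd z) + (1 - fst z) *\<^sub>R snd z \<in> ncube"
      using s x radial_point_in_ncube by (intro convexD[OF convex_ncube]) auto
    ultimately show ?thesis by simp
  qed
  then have \<sigma>: "?\<sigma> ` ({0..1} \<times> ncube) \<subseteq> {0..1} \<times> ncube" by blast
  have "continuous_on ({0..1} \<times> ncube) ?\<sigma>"
    by (intro continuous_intros)
  then show "continuous_on ({0..1} \<times> ncube) (\<lambda>z. H (?\<sigma> z))"
    using continuous_on_compose2[OF H(1) _ \<sigma>] by blast
  show "(\<lambda>z. H (?\<sigma> z)) ` ({0..1} \<times> ncube) \<subseteq> X"
    using \<sigma> H(2) unfolding image_subset_iff by blast
  show "\<forall>x\<in>ncube. H (?\<sigma> (0, x)) = g x \<and> H (?\<sigma> (1, x)) = H (collar_time x, radial_point x)"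
    using H(3) by simp
  show "\<forall>t\<in>{0..1}. \<forall>x\<in>nbdry. H (?\<sigma> (t, x)) = p"
  proof (intro ballI)
    fix t :: real and x :: "real^'n" assume "t \<in> {0..1}" "x \<in> nbdry"
    moreover have "t *\<^sub>R x + (1 - t) *\<^sub>R x = x"
      by (simp add: scaleR_left_distrib[symmetric])
    ultimately show "H (?\<sigma> (t, x)) = p"
      using H(4) \<open>\<gamma> 0 = p\<close> by (simp add: collar_on_nbdry)
  qed
qed

lemma based_homotopic_path_collar:
  fixes \<gamma> :: "real \<Rightarrow> 'a::metric_space"
  assumes "path \<gamma>" "path_image \<gamma> \<subseteq> X" "pathstart \<gamma> = p"
  shows "based_homotopic X p (\<lambda>x. p) (\<lambda>x::real^'n::finite. \<gamma> (collar_time x))"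
  unfolding based_homotopic_iff
proof (intro exI conjI)
  let ?K = "\<lambda>z::real \<times> (real^'n). \<gamma> (fst z * collar_time (snd z))"
  have t: "fst z * collar_time (snd z) \<in> {0..1}" if "z \<in> {0..1} \<times> ncube" for z
    using that collar_time_in_unit_interval[of "snd z"] by (auto intro: mult_le_one)
  have "continuous_on ({0..1} \<times> ncube) (\<lambda>z::real \<times> (real^'n). fst z * collar_time (snd z))"
    by (intro continuous_intros)
  then show "continuous_on ({0..1} \<times> ncube) ?K"
    using continuous_on_compose2[of "{0..1}" \<gamma>] assms(1) t unfolding path_def by blast
  show "?K ` ({0..1} \<times> ncube) \<subseteq> X"
    using assms(2) t unfolding path_image_def image_subset_iff by blast
  show "\<forall>x\<in>ncube. ?K (0, x) = p \<and> ?K (1, x) = \<gamma> (collar_time x)"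
    using assms(3) by (simp add: pathstart_def)
  show "\<forall>t\<in>{0..1}. \<forall>x\<in>nbdry. ?K (t, x) = p"
    using assms(3) by (simp add: pathstart_def collar_on_nbdry)
qed

lemma near_one_path_conjugate:
  fixes f g :: "real^'n::finite \<Rightarrow> 'a::metric_space"
  assumes \<gamma>: "path \<gamma>" "path_image \<gamma> \<subseteq> X" "pathstart \<gamma> = p"
    and f: "nloop X (pathfinish \<gamma>) f" and "path_conjugate X \<gamma> f g"
    and small: "\<And>u v. u \<in> f ` ncube \<Longrightarrow> v \<in> f ` ncube \<Longrightarrow> dist u v \<le> c"
  shows "near_one X p c (loop_class X p g)"
proof -
  obtain H where H: "continuous_on ({0..1} \<times> ncube) H" "H ` ({0..1} \<times> ncube) \<subseteq> X"
    "\<forall>x\<in>ncube. H (0, x) = g x \<and> H (1, x) = f x" "\<forall>t\<in>{0..1}. \<forall>x\<in>nbdry. H (t, x) = \<gamma> t"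
    using \<open>path_conjugate X \<gamma> f g\<close> unfolding path_conjugate_def by blast
  define \<alpha> where "\<alpha> x = H (collar_time x, radial_point x)" for x :: "real^'n"
  define \<beta> where "\<beta> x = \<gamma> (collar_time x)" for x :: "real^'n"
  have g\<alpha>: "based_homotopic X p g \<alpha>"
    unfolding \<alpha>_def by (rule based_homotopic_collar[of H X g \<gamma>]) (use H \<gamma>(3) in \<open>auto simp: pathstart_def\<close>)
  have one\<beta>: "based_homotopic X p (\<lambda>x. p) \<beta>"
    unfolding \<beta>_def using \<gamma> by (rule based_homotopic_path_collar)
  have f0: "f 0 = \<gamma> 1"
    using nloop_boundary[OF f zero_in_nbdry] by (simp add: pathfinish_def)
  have "loop_mu \<alpha> \<beta> \<le> c"
  proof (rule loop_mu_le)
    fix x :: "real^'n" assume x: "x \<in> ncube"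
    show "dist (\<alpha> x) (\<beta> x) \<le> c"
    proof (cases "1/4 \<le> centre_dist x")
      case True
      then have "\<alpha> x = \<beta> x"
        using H(4) radial_point_in_nbdry[OF True] collar_time_in_unit_interval[OF x]
        unfolding \<alpha>_def \<beta>_def by blast
      then show ?thesis
        using small[OF imageI imageI, OF zero_in_ncube zero_in_ncube] by simp
    next
      case False
      then have "\<alpha> x = f (radial_point x)" "\<beta> x = f 0"
        using H(3) radial_point_in_ncube[of x] f0 by (simp_all add: \<alpha>_def \<beta>_def collar_time_inner)
      then show ?thesis
        using small[OF imageI imageI, OF radial_point_in_ncube zero_in_ncube] by simp
    qed
  qed
  then have "near_one X p c (loop_class X p \<alpha>)"
    using based_homotopic_imp_nloop[OF g\<alpha>] based_homotopic_imp_nloop[OF one\<beta>]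
      loop_class_eq[OF one\<beta>] by (intro near_oneI) (auto simp: pi_n_one)
  then show ?thesis
    using loop_class_eq[OF g\<alpha>] by simp
qed

lemma near_one_spanier_group:
  fixes \<U> :: "'a::metric_space set set"
  assumes "p \<in> X" and "0 \<le> c" and small: "\<And>U u v. U \<in> \<U> \<Longrightarrow> u \<in> U \<Longrightarrow> v \<in> U \<Longrightarrow> dist u v \<le> c"
    and "a \<in> (spanier_group X \<U> p :: (real^'n::finite \<Rightarrow> 'a) set set)"
  shows "near_one X p c a"
proof (rule near_one_generate[OF assms(1) _ assms(2)])
  show "a \<in> generate (pi_n X p) (spanier_gens X \<U> p)"
    using assms(4) by (simp add: spanier_group_def)
  fix b assume "b \<in> (spanier_gens X \<U> p :: (real^'n \<Rightarrow> 'a) set set)"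
  then obtain g \<gamma> f U where b: "b = loop_class X p g" and \<gamma>: "path \<gamma>" "path_image \<gamma> \<subseteq> X" "pathstart \<gamma> = p"
    and f: "nloop X (pathfinish \<gamma>) f" "U \<in> \<U>" "f ` ncube \<subseteq> U" "path_conjugate X \<gamma> f g"
    unfolding spanier_gens_def by blast
  have "dist u v \<le> c" if "u \<in> f ` ncube" "v \<in> f ` ncube" for u v
    using small[OF f(2)] f(3) that by blast
  then show "near_one X p c b"
    unfolding b using near_one_path_conjugate[OF \<gamma> f(1) f(4)] by blast
qed

theorem proposition5p11:
  fixes X :: "'a::metric_space set" and x0 :: 'a and r :: real
  assumes "path_connected X" and "x0 \<in> X" and "r > 0"
  shows "\<exists>(\<U>, U0) \<in> cov X x0.
           (spanier_group X \<U> x0 :: (real^'n::finite \<Rightarrow> 'a) set set) \<subseteq> rho_ball X x0 r"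
proof -
  have r4: "r/4 > 0" using assms(3) by simp
  obtain \<W> :: "'a set set" where W: "\<forall>W\<in>\<W>. open W \<and> (\<exists>s. W \<subseteq> ball s (r/4))"
    "\<Union>\<W> = UNIV" "\<forall>x. \<exists>V. open V \<and> x \<in> V \<and> finite {W\<in>\<W>. W \<inter> V \<noteq> {}}"
    by (rule ex_locally_finite_refinement_of_balls[OF r4])
  define \<U> where "\<U> = (\<lambda>W. W \<inter> X) ` \<W>"
  have "x0 \<in> \<Union>\<W>" using W(2) by simp
  then obtain W0 where "W0 \<in> \<W>" "x0 \<in> W0" by blast
  moreover have "locally_finite_open_cover X \<U>"
    unfolding \<U>_def by (rule locally_finite_open_cover_restrict) (use W in auto)
  ultimately have "(\<U>, W0 \<inter> X) \<in> cov X x0"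
    using assms(2) by (auto simp: cov_def \<U>_def)
  moreover have small: "dist u v \<le> r/2" if "U \<in> \<U>" "u \<in> U" "v \<in> U" for U u v
  proof -
    obtain s where "U \<subseteq> ball s (r/4)" using \<open>U \<in> \<U>\<close> W(1) unfolding \<U>_def by blast
    then have "dist s u < r/4" "dist s v < r/4" using that by auto
    then show ?thesis using dist_triangle[of u v s] by (simp add: dist_commute)
  qed
  then have "near_one X x0 (r/2) a" if "a \<in> (spanier_group X \<U> x0 :: (real^'n \<Rightarrow> 'a) set set)" for a
    using near_one_spanier_group[OF assms(2) _ small that] assms(3) by simp
  then have "(spanier_group X \<U> x0 :: (real^'n \<Rightarrow> 'a) set set) \<subseteq> rho_ball X x0 r"
    using loop_rho_le_of_near_one assms(3)
    by (fastforce simp: rho_ball_def near_one_def carrier_pi_n)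
  ultimately show ?thesis by blast
qed

end
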